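(* Let $T$ be an equilateral triangle. Then for every positive integer $n$, $$h(n,T)=\left\lfloor \frac{n}{3} \right\rfloor \cdot \left\lfloor \frac{n+1}{3} \right\rfloor \cdot \left\lfloor \frac{n+2}{3} \right\rfloor.$$
   Context: Let $T$ be a triangle with side lengths $a,b,c$, let $\varepsilon>0$ and $\varepsilon'=\varepsilon\cdot\min\{a,b,c\}$. A triangle $A'B'C'$ is $\varepsilon$-congruent to $T$ if there exist points $A,B,C\in\mathbb{R}^2$ such that $ABC$ is congruent to $T$ and $A',B',C'$ lie in the closed disks of radius $\varepsilon'$ around $A,B,C$ respectively. $h(n,T,\varepsilon)$ denotes the maximum, over all point sets $P\subseteq\mathbb{R}^2$ with $|P|=n$, of the number of 3-element subsets of $P$ forming a triangle $\varepsilon$-congruent to $T$, and $h(n,T):=\min_{\varepsilon>0}h(n,T,\varepsilon)$. *)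

theory Defs
  imports "HOL-Analysis.Analysis"
begin

(* A triangle T is given by its side lengths (a,b,c): a = |BC|, b = |CA|, c = |AB|. *)
type_synonym tri = "real \<times> real \<times> real"

definition min_side :: "tri \<Rightarrow> real" where
  "min_side T = (case T of (a,b,c) \<Rightarrow> min a (min b c))"

definition congruent_to :: "real^2 \<Rightarrow> real^2 \<Rightarrow> real^2 \<Rightarrow> tri \<Rightarrow> bool" where
  "congruent_to A B C T = (case T of (a,b,c) \<Rightarrow>
      dist B C = a \<and> dist C A = b \<and> dist A B = c)"

definition eps_congruent :: "tri \<Rightarrow> real \<Rightarrow> real^2 \<Rightarrow> real^2 \<Rightarrow> real^2 \<Rightarrow> bool" where
  "eps_congruent T \<epsilon> A' B' C' =
     (\<exists>A B C. congruent_to A B C T \<and>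
        dist A' A \<le> \<epsilon> * min_side T \<and> dist B' B \<le> \<epsilon> * min_side T \<and>
        dist C' C \<le> \<epsilon> * min_side T)"

definition num_eps_congruent :: "tri \<Rightarrow> real \<Rightarrow> (real^2) set \<Rightarrow> nat" where
  "num_eps_congruent T \<epsilon> P = card {S. S \<subseteq> P \<and> card S = 3 \<and>
      (\<exists>A' B' C'. S = {A', B', C'} \<and> eps_congruent T \<epsilon> A' B' C')}"

definition h_eps :: "nat \<Rightarrow> tri \<Rightarrow> real \<Rightarrow> nat" where
  "h_eps n T \<epsilon> = Max {num_eps_congruent T \<epsilon> P | P. finite P \<and> card P = n}"

definition h :: "nat \<Rightarrow> tri \<Rightarrow> nat" where
  "h n T = Min {h_eps n T \<epsilon> | \<epsilon>. \<epsilon> > 0}"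

end

(* For eps = 1/200, every side of a triangle eps-congruent to the equilateral triangle of side s
   is within s/100 of s.  Four points of the plane cannot be pairwise at such distances: the Gram
   determinant of the three difference vectors from one of them vanishes because the plane is
   two-dimensional, yet it is positive because the Gram matrix is close to s^2 times the matrix
   with 1 on the diagonal and 1/2 elsewhere.  Hence the pairs of points at distance about s form
   a K4-free graph containing every counted triangle, and a K4-free graph on n vertices has at
   most as many triangles as the balanced complete tripartite graph, with parts of sizes
   n div 3, (n + 1) div 3, (n + 2) div 3; this follows by induction, deleting a triangle and
   counting the edges and triangles that meet it.  Conversely, for every eps, three small clusters
   of these sizes around the vertices of the triangle attain the bound. *)

theory Submission
  imports Defs
begin

section \<open>Triangles in K4-free graphs\<close>

definition tripartite_edges :: "nat \<Rightarrow> nat" where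
  "tripartite_edges n =
     n div 3 * ((n + 1) div 3) + (n + 1) div 3 * ((n + 2) div 3) + n div 3 * ((n + 2) div 3)"

definition tripartite_triangles :: "nat \<Rightarrow> nat" where
  "tripartite_triangles n = n div 3 * ((n + 1) div 3) * ((n + 2) div 3)"

lemma div3_parts_sum: "(n::nat) div 3 + (n + 1) div 3 + (n + 2) div 3 = n"
  by presburger

lemma div3_shift3:
  "((n::nat) + 3) div 3 = n div 3 + 1" "(n + 3 + 1) div 3 = (n + 1) div 3 + 1"
  "(n + 3 + 2) div 3 = (n + 2) div 3 + 1"
  by presburger+

lemma tripartite_edges_add3: "tripartite_edges (n + 3) = tripartite_edges n + 2 * n + 3"
  using div3_parts_sum[of n]
  unfolding tripartite_edges_def div3_shift3 by (simp add: algebra_simps)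

lemma tripartite_edges_add2: "tripartite_edges n + n + 1 \<le> tripartite_edges (n + 2)"
proof -
  have "(n + 2 + 1) div 3 = n div 3 + 1" "(n + 2 + 2) div 3 = (n + 1) div 3 + 1" by presburger+
  then show ?thesis using div3_parts_sum[of n] by (simp add: tripartite_edges_def algebra_simps)
qed

lemma tripartite_triangles_add3:
  "tripartite_triangles (n + 3) = tripartite_triangles n + tripartite_edges n + n + 1"
  using div3_parts_sum[of n]
  unfolding tripartite_triangles_def tripartite_edges_def div3_shift3 by (simp add: algebra_simps)

definition clique :: "('a \<Rightarrow> 'a \<Rightarrow> bool) \<Rightarrow> 'a set \<Rightarrow> bool" where
  "clique E S \<longleftrightarrow> (\<forall>x\<in>S. \<forall>y\<in>S. x \<noteq> y \<longrightarrow> E x y)"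

definition cliques :: "('a \<Rightarrow> 'a \<Rightarrow> bool) \<Rightarrow> nat \<Rightarrow> 'a set \<Rightarrow> 'a set set" where
  "cliques E k V = {S. S \<subseteq> V \<and> card S = k \<and> clique E S}"

definition K4_free :: "('a \<Rightarrow> 'a \<Rightarrow> bool) \<Rightarrow> bool" where
  "K4_free E \<longleftrightarrow> (\<forall>S. card S = 4 \<longrightarrow> \<not> clique E S)"

lemma clique_subset: "clique E S \<Longrightarrow> T \<subseteq> S \<Longrightarrow> clique E T"
  unfolding clique_def by blast

lemma clique_insert:
  "symp E \<Longrightarrow> clique E (insert w S) \<longleftrightarrow> clique E S \<and> (\<forall>t\<in>S. t \<noteq> w \<longrightarrow> E w t)"
  unfolding clique_def by (auto dest: sympD)

lemma finite_cliques: "finite V \<Longrightarrow> finite (cliques E k V)"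
  unfolding cliques_def by (rule finite_subset[of _ "Pow V"]) auto

lemma card_cliques_le_choose: "finite V \<Longrightarrow> card (cliques E k V) \<le> card V choose k"
  using card_mono[of "{S. S \<subseteq> V \<and> card S = k}" "cliques E k V"] n_subsets[of V k]
  by (simp add: cliques_def finite_subset[of _ "Pow V"] subset_iff)

lemma insert_in_cliques:
  assumes "symp E" "finite V" "S \<in> cliques E k V" "w \<in> V - S" "\<forall>t\<in>S. E w t"
  shows "insert w S \<in> cliques E (Suc k) V"
  using assms finite_subset[of S V] by (auto simp: cliques_def clique_insert)

lemma K4_free_cliques4: "K4_free E \<Longrightarrow> cliques E 4 V = {}"
  unfolding K4_free_def cliques_def by blast

lemma card_adjacent_clique_less:
  assumes "symp E" "finite V" "K \<in> cliques E k V" "cliques E (Suc k) V = {}" "w \<in> V - K"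
  shows "card {t\<in>K. E w t} < k"
proof -
  have "finite K" "card K = k" using assms(2,3) finite_subset by (auto simp: cliques_def)
  have "{t\<in>K. E w t} \<noteq> K" using insert_in_cliques[OF assms(1,2,3,5)] assms(4) by auto
  then have "{t\<in>K. E w t} \<subset> K" by auto
  then show ?thesis using psubset_card_mono[OF \<open>finite K\<close>] \<open>card K = k\<close> by simp
qed

lemma cliques2_split:
  assumes "K \<subseteq> V"
  shows "cliques E 2 V \<subseteq> cliques E 2 (V - K) \<union> cliques E 2 K \<union>
           (\<Union>w\<in>V - K. (\<lambda>t. {w, t}) ` {t\<in>K. E w t})"
proof
  fix S assume "S \<in> cliques E 2 V"
  then obtain a b where S: "S = {a, b}" "a \<noteq> b" "a \<in> V" "b \<in> V" "E a b" "E b a"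
    unfolding cliques_def clique_def card_2_iff by auto
  consider "a \<in> K" "b \<in> K" | "a \<notin> K" "b \<notin> K" | "a \<in> K" "b \<notin> K" | "a \<notin> K" "b \<in> K"
    by blast
  then show "S \<in> cliques E 2 (V - K) \<union> cliques E 2 K \<union> (\<Union>w\<in>V - K. (\<lambda>t. {w, t}) ` {t\<in>K. E w t})"
    by cases (use S in \<open>auto simp: cliques_def clique_def insert_commute\<close>)
qed

lemma card_cliques2_remove:
  assumes "finite V" "K \<subseteq> V"
  shows "card (cliques E 2 V) \<le>
           card (cliques E 2 (V - K)) + card (cliques E 2 K) + (\<Sum>w\<in>V - K. card {t\<in>K. E w t})"
proof -
  have fin: "finite (V - K)" "finite K" using assms finite_subset by auto
  have "card (cliques E 2 V) \<le> card (cliques E 2 (V - K) \<union> cliques E 2 K \<union>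
           (\<Union>w\<in>V - K. (\<lambda>t. {w, t}) ` {t\<in>K. E w t}))"
    by (rule card_mono[OF _ cliques2_split[OF assms(2)]]) (simp add: fin finite_cliques)
  also have "\<dots> \<le> card (cliques E 2 (V - K)) + card (cliques E 2 K) +
                    card (\<Union>w\<in>V - K. (\<lambda>t. {w, t}) ` {t\<in>K. E w t})"
    by (meson add_mono card_Un_le le_refl order_trans)
  also have "card (\<Union>w\<in>V - K. (\<lambda>t. {w, t}) ` {t\<in>K. E w t}) \<le> (\<Sum>w\<in>V - K. card {t\<in>K. E w t})"
    by (rule order_trans[OF card_UN_le[OF fin(1)]]) (simp add: sum_mono card_image_le fin)
  finally show ?thesis by simp
qed

lemma card_cliques2_remove_clique:
  assumes "symp E" "finite V" "K \<in> cliques E k V" "cliques E (Suc k) V = {}"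
  shows "card (cliques E 2 V) \<le> card (cliques E 2 (V - K)) + (k choose 2) + (k - 1) * card (V - K)"
proof -
  have "K \<subseteq> V" "finite K" "card K = k" using assms(2,3) finite_subset by (auto simp: cliques_def)
  have "card {t\<in>K. E w t} \<le> k - 1" if "w \<in> V - K" for w
    using card_adjacent_clique_less[OF assms that] by arith
  then have "(\<Sum>w\<in>V - K. card {t\<in>K. E w t}) \<le> (k - 1) * card (V - K)"
    using sum_mono[of "V - K" _ "\<lambda>_. k - 1"] by (simp add: mult.commute)
  then show ?thesis
    using card_cliques2_remove[OF \<open>finite V\<close> \<open>K \<subseteq> V\<close>, of E]
      card_cliques_le_choose[OF \<open>finite K\<close>, of E 2, unfolded \<open>card K = k\<close>]
    by linarith
qed

lemma cliques3_split:
  assumes "K \<subseteq> V"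
  shows "cliques E 3 V \<subseteq> cliques E 3 (V - K) \<union> cliques E 3 K \<union>
           (\<Union>w\<in>V - K. insert w ` cliques E 2 {t\<in>K. E w t}) \<union>
           (\<Union>e\<in>cliques E 2 (V - K). (\<lambda>t. insert t e) ` {t\<in>K. \<forall>u\<in>e. E u t})"
    (is "_ \<subseteq> ?outside \<union> ?inside \<union> ?one_out \<union> ?two_out")
proof
  fix S assume S: "S \<in> cliques E 3 V"
  then have "finite S" "S \<subseteq> V" "clique E S" "card S = 3"
    by (auto simp: cliques_def intro: card_ge_0_finite)
  then have split: "card (S \<inter> K) + card (S - K) = 3" using card_Int_Diff[of S K] by simp
  have SE: "E x y" if "x \<in> S" "y \<in> S" "x \<noteq> y" for x y
    using \<open>clique E S\<close> that unfolding clique_def by blast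
  consider "card (S - K) = 0" | "card (S - K) = 1" | "card (S - K) = 2" | "card (S - K) = 3"
    using split by linarith
  then show "S \<in> ?outside \<union> ?inside \<union> ?one_out \<union> ?two_out"
  proof cases
    case 1
    then have "S \<subseteq> K" using \<open>finite S\<close> by auto
    then show ?thesis using S by (auto simp: cliques_def)
  next
    case 2
    then obtain w where w: "S - K = {w}" by (rule card_1_singletonE)
    have "w \<in> S" "w \<notin> K" using w by auto
    have "S \<inter> K \<in> cliques E 2 {t\<in>K. E w t}"
      using split 2 \<open>w \<in> S\<close> \<open>w \<notin> K\<close> SE clique_subset[OF \<open>clique E S\<close>] by (auto simp: cliques_def)
    moreover have "S = insert w (S \<inter> K)" "w \<in> V - K" using w \<open>S \<subseteq> V\<close> by auto
    ultimately show ?thesis by blast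
  next
    case 3
    then have "card (S \<inter> K) = 1" using split by linarith
    then obtain t where t: "S \<inter> K = {t}" by (rule card_1_singletonE)
    have "S - K \<in> cliques E 2 (V - K)"
      using 3 \<open>S \<subseteq> V\<close> clique_subset[OF \<open>clique E S\<close>] by (auto simp: cliques_def)
    moreover have "S = insert t (S - K)" "t \<in> {t\<in>K. \<forall>u\<in>S - K. E u t}" using t SE by auto
    ultimately show ?thesis by blast
  next
    case 4
    then have "S - K = S" using card_subset_eq[OF \<open>finite S\<close>, of "S - K"] \<open>card S = 3\<close> by auto
    then show ?thesis using S by (auto simp: cliques_def)
  qed
qed

lemma card_cliques3_remove:
  assumes "finite V" "K \<subseteq> V"
  shows "card (cliques E 3 V) \<le>
           card (cliques E 3 (V - K)) + card (cliques E 3 K) +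
           (\<Sum>w\<in>V - K. card (cliques E 2 {t\<in>K. E w t})) +
           (\<Sum>e\<in>cliques E 2 (V - K). card {t\<in>K. \<forall>u\<in>e. E u t})"
proof -
  have fin: "finite (V - K)" "finite K" "finite (cliques E 2 (V - K))"
    using assms finite_subset finite_cliques[of "V - K"] by auto
  have "card (cliques E 3 V) \<le> card (cliques E 3 (V - K) \<union> cliques E 3 K \<union>
           (\<Union>w\<in>V - K. insert w ` cliques E 2 {t\<in>K. E w t}) \<union>
           (\<Union>e\<in>cliques E 2 (V - K). (\<lambda>t. insert t e) ` {t\<in>K. \<forall>u\<in>e. E u t}))"
    by (rule card_mono[OF _ cliques3_split[OF assms(2)]]) (simp add: fin finite_cliques)
  also have "\<dots> \<le> card (cliques E 3 (V - K)) + card (cliques E 3 K) +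
           card (\<Union>w\<in>V - K. insert w ` cliques E 2 {t\<in>K. E w t}) +
           card (\<Union>e\<in>cliques E 2 (V - K). (\<lambda>t. insert t e) ` {t\<in>K. \<forall>u\<in>e. E u t})"
    by (meson add_mono card_Un_le le_refl order_trans)
  also have "card (\<Union>w\<in>V - K. insert w ` cliques E 2 {t\<in>K. E w t}) \<le>
               (\<Sum>w\<in>V - K. card (cliques E 2 {t\<in>K. E w t}))"
    by (rule order_trans[OF card_UN_le[OF fin(1)]]) (simp add: sum_mono card_image_le fin finite_cliques)
  also have "card (\<Union>e\<in>cliques E 2 (V - K). (\<lambda>t. insert t e) ` {t\<in>K. \<forall>u\<in>e. E u t}) \<le>
               (\<Sum>e\<in>cliques E 2 (V - K). card {t\<in>K. \<forall>u\<in>e. E u t})"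
    by (rule order_trans[OF card_UN_le[OF fin(3)]]) (simp add: sum_mono card_image_le fin)
  finally show ?thesis by simp
qed

lemma card_common_neighbours_le_1:
  assumes "symp E" "K4_free E" "finite K" "clique E K" "e \<in> cliques E 2 W" "K \<inter> W = {}"
  shows "card {t\<in>K. \<forall>u\<in>e. E u t} \<le> 1"
proof -
  have "t = t'" if t: "t \<in> K" "\<forall>u\<in>e. E u t" and t': "t' \<in> K" "\<forall>u\<in>e. E u t'" for t t'
  proof (rule ccontr)
    assume "t \<noteq> t'"
    have "e \<subseteq> W" "card e = 2" "clique E e" "finite e" using assms(5)
      by (auto simp: cliques_def intro: card_ge_0_finite)
    then have "t \<notin> e" "t' \<notin> e" using t t' assms(6) by auto
    then have "card (insert t (insert t' e)) = 4"
      using \<open>t \<noteq> t'\<close> \<open>card e = 2\<close> \<open>finite e\<close> by simp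
    moreover have "clique E (insert t (insert t' e))"
      using \<open>clique E e\<close> t t' \<open>t \<noteq> t'\<close> assms(1,4)
      by (auto simp: clique_insert clique_def dest: sympD)
    ultimately show False using assms(2) unfolding K4_free_def by blast
  qed
  then show ?thesis
    using card_le_Suc0_iff_eq[of "{t\<in>K. \<forall>u\<in>e. E u t}"] assms(3) by auto
qed

lemma card_cliques2_le_tripartite_edges:
  assumes "finite V" "symp E" "K4_free E"
  shows "card (cliques E 2 V) \<le> tripartite_edges (card V)"
  using assms(1)
proof (induction "card V" arbitrary: V rule: less_induct)
  case less
  have remove: "card V = card (V - K) + k" "card (cliques E 2 (V - K)) \<le> tripartite_edges (card (V - K))"
    if "K \<in> cliques E k V" "k > 0" for K k
  proof -
    have "K \<subseteq> V" "card K = k" using that by (auto simp: cliques_def)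
    then show "card V = card (V - K) + k"
      using less.prems card_mono[of V K] card_Diff_subset[of K V] finite_subset[of K V] by auto
    with \<open>k > 0\<close> show "card (cliques E 2 (V - K)) \<le> tripartite_edges (card (V - K))"
      using less.hyps less.prems by simp
  qed
  consider (triangle) K where "K \<in> cliques E 3 V"
    | (edge) K where "K \<in> cliques E 2 V" "cliques E 3 V = {}"
    | (no_edge) "cliques E 2 V = {}"
    by blast
  then show ?case
  proof cases
    case triangle
    have "cliques E (Suc 3) V = {}" using K4_free_cliques4[OF assms(3)] by simp
    then have "card (cliques E 2 V) \<le> card (cliques E 2 (V - K)) + 3 + 2 * card (V - K)"
      using card_cliques2_remove_clique[OF assms(2) less.prems triangle] by (simp add: numeral_eq_Suc)
    then show ?thesis using remove[OF triangle] tripartite_edges_add3[of "card (V - K)"] by simp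
  next
    case edge
    then have "card (cliques E 2 V) \<le> card (cliques E 2 (V - K)) + 1 + card (V - K)"
      using card_cliques2_remove_clique[OF assms(2) less.prems edge(1)] by (simp add: numeral_eq_Suc)
    then show ?thesis using remove[OF edge(1)] tripartite_edges_add2[of "card (V - K)"] by simp
  qed simp
qed

lemma card_cliques3_le_tripartite_triangles:
  assumes "finite V" "symp E" "K4_free E"
  shows "card (cliques E 3 V) \<le> tripartite_triangles (card V)"
  using assms(1)
proof (induction "card V" arbitrary: V rule: less_induct)
  case less
  show ?case
  proof (cases "cliques E 3 V = {}")
    case False
    then obtain K where K: "K \<in> cliques E 3 V" by blast
    then have "K \<subseteq> V" "card K = 3" "clique E K" "finite K" by (auto simp: cliques_def intro: card_ge_0_finite)
    have no_K4: "cliques E (Suc 3) V = {}" using K4_free_cliques4[OF assms(3)] by simp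
    define W where "W = V - K"
    have "finite W" using less.prems by (simp add: W_def)
    have card_V: "card V = card W + 3"
      using less.prems \<open>K \<subseteq> V\<close> \<open>card K = 3\<close> \<open>finite K\<close> card_mono[of V K] card_Diff_subset[of K V] W_def by auto
    have "card (cliques E 3 W) \<le> tripartite_triangles (card W)"
      using less.hyps[of W] card_V \<open>finite W\<close> by simp
    moreover have "card (cliques E 3 K) \<le> 1"
      using card_cliques_le_choose[OF \<open>finite K\<close>, of E 3] \<open>card K = 3\<close> by simp
    moreover have "(\<Sum>w\<in>W. card (cliques E 2 {t\<in>K. E w t})) \<le> card W"
    proof -
      have "card (cliques E 2 {t\<in>K. E w t}) \<le> 1" if "w \<in> W" for w
      proof -
        have "card {t\<in>K. E w t} \<le> 2"
          using card_adjacent_clique_less[OF assms(2) less.prems K no_K4, where w = w] that W_def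
          by (simp add: numeral_eq_Suc)
        then have "card {t\<in>K. E w t} choose 2 \<le> 2 choose 2" by (rule binomial_right_mono)
        then show ?thesis using card_cliques_le_choose[of "{t\<in>K. E w t}" E 2] \<open>finite K\<close> by simp
      qed
      then have "(\<Sum>w\<in>W. card (cliques E 2 {t\<in>K. E w t})) \<le> (\<Sum>w\<in>W. 1)"
        by (intro sum_mono) simp
      then show ?thesis by simp
    qed
    moreover have "(\<Sum>e\<in>cliques E 2 W. card {t\<in>K. \<forall>u\<in>e. E u t}) \<le> tripartite_edges (card W)"
    proof -
      have "(\<Sum>e\<in>cliques E 2 W. card {t\<in>K. \<forall>u\<in>e. E u t}) \<le> (\<Sum>e\<in>cliques E 2 W. 1)"
        using card_common_neighbours_le_1[OF assms(2,3) \<open>finite K\<close> \<open>clique E K\<close>] W_def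
        by (intro sum_mono) auto
      also have "\<dots> = card (cliques E 2 W)" by simp
      also have "\<dots> \<le> tripartite_edges (card W)"
        by (rule card_cliques2_le_tripartite_edges[OF \<open>finite W\<close> assms(2,3)])
      finally show ?thesis .
    qed
    ultimately show ?thesis
      using card_cliques3_remove[OF less.prems \<open>K \<subseteq> V\<close>, of E] tripartite_triangles_add3[of "card W"]
      unfolding W_def[symmetric] card_V by linarith
  qed simp
qed

section \<open>Four nearly equidistant points in the plane\<close>

lemma gram_det_plane_eq_0:
  fixes u v w :: "real^2"
  shows "(u \<bullet> u) * (v \<bullet> v) * (w \<bullet> w) + 2 * (u \<bullet> v) * (v \<bullet> w) * (u \<bullet> w)
           - (u \<bullet> u) * (v \<bullet> w)^2 - (v \<bullet> v) * (u \<bullet> w)^2 - (w \<bullet> w) * (u \<bullet> v)^2 = 0"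
  by (simp add: inner_vec_def sum_2 power2_eq_square algebra_simps)

lemma sym_det3_pos_near_equilateral:
  fixes S a b c p q r :: real
  assumes "S > 0"
    and "24/25*S \<le> a" "a \<le> 26/25*S" "24/25*S \<le> b" "b \<le> 26/25*S" "24/25*S \<le> c" "c \<le> 26/25*S"
    and "23/50*S \<le> p" "p \<le> 27/50*S" "23/50*S \<le> q" "q \<le> 27/50*S" "23/50*S \<le> r" "r \<le> 27/50*S"
  shows "a*b*c + 2*p*q*r - a*q^2 - b*r^2 - c*p^2 > 0"
proof -
  have diag: "(24/25*S)*(24/25*S)*(24/25*S) \<le> a*b*c"
    by (intro mult_mono) (use assms in auto)
  have off_diag: "(23/50*S)*(23/50*S)*(23/50*S) \<le> p*q*r"
    by (intro mult_mono) (use assms in auto)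
  have sq: "x^2 \<le> (27/50*S)^2" if "23/50*S \<le> x" "x \<le> 27/50*S" for x
    by (rule power_mono) (use that assms in auto)
  have "a*q^2 \<le> (26/25*S)*(27/50*S)^2" "b*r^2 \<le> (26/25*S)*(27/50*S)^2" "c*p^2 \<le> (26/25*S)*(27/50*S)^2"
    by (intro mult_mono sq; use assms in auto)+
  moreover have "(24/25*S)*(24/25*S)*(24/25*S) + 2*((23/50*S)*(23/50*S)*(23/50*S)) - 3*((26/25*S)*(27/50*S)^2)
     = 21202/125000 * (S*S*S)" by (simp add: power2_eq_square algebra_simps)
  moreover have "S*S*S > 0" using assms by simp
  ultimately show ?thesis using diag off_diag by linarith
qed

lemma inner_bounds_near_equidistant:
  fixes x y z :: "'a::real_inner"
  assumes "\<bar>dist x y - s\<bar> \<le> s/100" "\<bar>dist x z - s\<bar> \<le> s/100" "\<bar>dist y z - s\<bar> \<le> s/100"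
  shows "24/25 * s^2 \<le> (y - x) \<bullet> (y - x)" "(y - x) \<bullet> (y - x) \<le> 26/25 * s^2"
    and "23/50 * s^2 \<le> (y - x) \<bullet> (z - x)" "(y - x) \<bullet> (z - x) \<le> 27/50 * s^2"
proof -
  have sq: "9801/10000 * s^2 \<le> d^2" "d^2 \<le> 10201/10000 * s^2" if "\<bar>d - s\<bar> \<le> s/100" for d
  proof -
    have "(99/100 * s)^2 \<le> d^2" "d^2 \<le> (101/100 * s)^2"
      by (rule power_mono; use that in linarith)+
    moreover have "(99/100 * s)^2 = 9801/10000 * s^2" "(101/100 * s)^2 = 10201/10000 * s^2"
      by (simp_all add: power2_eq_square)
    ultimately show "9801/10000 * s^2 \<le> d^2" "d^2 \<le> 10201/10000 * s^2" by linarith+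
  qed
  note bounds = sq[OF assms(1)] sq[OF assms(2)] sq[OF assms(3)] zero_le_power2[of s]
  have "(y - x) \<bullet> (y - x) = (dist x y)^2"
    by (metis dist_commute dist_norm power2_norm_eq_inner)
  then show "24/25 * s^2 \<le> (y - x) \<bullet> (y - x)" "(y - x) \<bullet> (y - x) \<le> 26/25 * s^2"
    using bounds by linarith+
  have "2 * ((y - x) \<bullet> (z - x)) = (dist x y)^2 + (dist x z)^2 - (dist y z)^2"
    by (simp add: dot_norm_neg dist_norm norm_minus_commute)
  then show "23/50 * s^2 \<le> (y - x) \<bullet> (z - x)" "(y - x) \<bullet> (z - x) \<le> 27/50 * s^2"
    using bounds by linarith+
qed

lemma card_eq_4E:
  assumes "card S = 4"
  obtains a b c d where "S = {a, b, c, d}" "distinct [a, b, c, d]"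
proof -
  obtain a T where "S = insert a T" "a \<notin> T" "card T = 3"
    using assms card_Suc_eq[of S 3] by auto
  then show thesis using that by (auto simp: card_3_iff)
qed

lemma no_four_points_nearly_equidistant:
  fixes S :: "(real^2) set"
  assumes "card S = 4" and near: "\<forall>x\<in>S. \<forall>y\<in>S. x \<noteq> y \<longrightarrow> \<bar>dist x y - s\<bar> \<le> s/100"
  shows False
proof -
  obtain a b c d where abcd: "S = {a, b, c, d}" "distinct [a, b, c, d]"
    using assms(1) by (rule card_eq_4E)
  have "\<bar>dist a b - s\<bar> \<le> s/100" "dist a b > 0" using near abcd by auto
  then have "s > 0" by linarith
  note bounds_abc = inner_bounds_near_equidistant[of a b s c]
    and bounds_acd = inner_bounds_near_equidistant[of a c s d]
    and bounds_adb = inner_bounds_near_equidistant[of a d s b]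
  have "(b - a) \<bullet> (b - a) * ((c - a) \<bullet> (c - a)) * ((d - a) \<bullet> (d - a))
        + 2 * ((b - a) \<bullet> (c - a)) * ((c - a) \<bullet> (d - a)) * ((d - a) \<bullet> (b - a))
        - (b - a) \<bullet> (b - a) * ((c - a) \<bullet> (d - a))^2 - (c - a) \<bullet> (c - a) * ((d - a) \<bullet> (b - a))^2
        - (d - a) \<bullet> (d - a) * ((b - a) \<bullet> (c - a))^2 > 0"
    by (rule sym_det3_pos_near_equilateral[of "s^2"])
      (use \<open>s > 0\<close> near abcd bounds_abc bounds_acd bounds_adb in \<open>simp_all add: dist_commute\<close>)
  then show False
    using gram_det_plane_eq_0[of "b - a" "c - a" "d - a"] by (simp add: inner_commute)
qed

section \<open>Counting eps-congruent equilateral triangles\<close>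

lemma min_side_equilateral [simp]: "min_side (s, s, s) = s"
  by (simp add: min_side_def)

lemma abs_dist_diff_le_dist_add: "\<bar>dist a b - dist c d\<bar> \<le> dist a c + dist b d"
  using dist_triangle[of a b c] dist_triangle[of c b d] dist_triangle[of c d a] dist_triangle[of a d b]
  by (simp add: dist_commute abs_le_iff)

lemma eps_congruent_equilateral_near:
  assumes "eps_congruent (s, s, s) (1/200) A' B' C'"
  shows "\<bar>dist A' B' - s\<bar> \<le> s/100" "\<bar>dist B' C' - s\<bar> \<le> s/100" "\<bar>dist A' C' - s\<bar> \<le> s/100"
proof -
  obtain A B C where "dist B C = s" "dist C A = s" "dist A B = s"
    and "dist A' A \<le> s/200" "dist B' B \<le> s/200" "dist C' C \<le> s/200"
    using assms unfolding eps_congruent_def congruent_to_def by auto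
  then show "\<bar>dist A' B' - s\<bar> \<le> s/100" "\<bar>dist B' C' - s\<bar> \<le> s/100" "\<bar>dist A' C' - s\<bar> \<le> s/100"
    using abs_dist_diff_le_dist_add[of A' B' A B] abs_dist_diff_le_dist_add[of B' C' B C]
      abs_dist_diff_le_dist_add[of A' C' A C]
    by (auto simp: dist_commute)
qed

lemma num_eps_congruent_equilateral_le:
  assumes "finite P"
  shows "num_eps_congruent (s, s, s) (1/200) P \<le> tripartite_triangles (card P)"
proof -
  define E where "E x y \<longleftrightarrow> \<bar>dist x y - s\<bar> \<le> s/100" for x y :: "real^2"
  have "symp E" by (auto intro: sympI simp: E_def dist_commute)
  have "K4_free E"
    unfolding K4_free_def clique_def E_def using no_four_points_nearly_equidistant by blast
  have "{S. S \<subseteq> P \<and> card S = 3 \<and> (\<exists>A' B' C'. S = {A', B', C'} \<and> eps_congruent (s, s, s) (1/200) A' B' C')}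
          \<subseteq> cliques E 3 P"
    using eps_congruent_equilateral_near
    by (fastforce simp: cliques_def clique_def E_def dist_commute)
  then have "num_eps_congruent (s, s, s) (1/200) P \<le> card (cliques E 3 P)"
    unfolding num_eps_congruent_def by (rule card_mono[OF finite_cliques[OF assms]])
  also have "\<dots> \<le> tripartite_triangles (card P)"
    by (rule card_cliques3_le_tripartite_triangles[OF assms \<open>symp E\<close> \<open>K4_free E\<close>])
  finally show ?thesis .
qed

lemma infinite_cball:
  fixes x :: "'a::{perfect_space, metric_space}"
  assumes "r > 0"
  shows "infinite (cball x r)"
  using islimpt_eq_infinite_cball[of x UNIV] assms by simp

lemma dist_vector_2: "dist (vector [a, b] :: real^2) (vector [c, d]) = sqrt ((a - c)^2 + (b - d)^2)"
  by (simp add: dist_vec_def L2_set_def sum_2 dist_real_def)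

lemma exists_equilateral_triangle:
  assumes "s \<ge> 0"
  shows "\<exists>A B C :: real^2. congruent_to A B C (s, s, s)"
proof -
  define A B C where "A = (vector [0, 0] :: real^2)" and "B = (vector [s, 0] :: real^2)"
    and "C = (vector [s/2, s * sqrt 3 / 2] :: real^2)"
  have "(s/2)^2 + (s * sqrt 3 / 2)^2 = s^2" by (simp add: power_mult_distrib power_divide)
  then have "dist B C = s" "dist C A = s" "dist A B = s"
    unfolding A_def B_def C_def dist_vector_2 using assms by (simp_all add: power2_eq_square)
  then show ?thesis unfolding congruent_to_def by auto
qed

lemma card_product_le_num_eps_congruent:
  assumes "congruent_to A B C T"
    and "X \<subseteq> cball A (\<epsilon> * min_side T)" "Y \<subseteq> cball B (\<epsilon> * min_side T)" "Z \<subseteq> cball C (\<epsilon> * min_side T)"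
    and "finite X" "finite Y" "finite Z" "X \<inter> Y = {}" "X \<inter> Z = {}" "Y \<inter> Z = {}"
  shows "card X * card Y * card Z \<le> num_eps_congruent T \<epsilon> (X \<union> Y \<union> Z)"
proof -
  define triangle where "triangle = (\<lambda>(a, b, c). {a, b, c :: real^2})"
  have inj: "inj_on triangle (X \<times> Y \<times> Z)"
  proof (rule inj_onI)
    fix p q assume "p \<in> X \<times> Y \<times> Z" "q \<in> X \<times> Y \<times> Z" "triangle p = triangle q"
    then obtain a b c a' b' c' where abc: "p = (a, b, c)" "q = (a', b', c')"
      "a \<in> X" "b \<in> Y" "c \<in> Z" "a' \<in> X" "b' \<in> Y" "c' \<in> Z" "{a, b, c} = {a', b', c'}"
      by (auto simp: triangle_def)
    moreover have "a \<noteq> b'" "a \<noteq> c'" "b \<noteq> a'" "b \<noteq> c'" "c \<noteq> a'" "c \<noteq> b'"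
      using abc assms(8-10) by auto
    moreover have "a \<in> {a', b', c'}" "b \<in> {a', b', c'}" "c \<in> {a', b', c'}"
      using abc(9) by blast+
    ultimately have "a = a'" "b = b'" "c = c'" by auto
    then show "p = q" using abc by simp
  qed
  have image: "triangle ` (X \<times> Y \<times> Z) \<subseteq> {S. S \<subseteq> X \<union> Y \<union> Z \<and> card S = 3 \<and>
      (\<exists>A' B' C'. S = {A', B', C'} \<and> eps_congruent T \<epsilon> A' B' C')}"
  proof clarify
    fix a b c assume "a \<in> X" "b \<in> Y" "c \<in> Z"
    then have "a \<noteq> b" "a \<noteq> c" "b \<noteq> c" using assms(8-10) by auto
    moreover have "dist a A \<le> \<epsilon> * min_side T" "dist b B \<le> \<epsilon> * min_side T" "dist c C \<le> \<epsilon> * min_side T"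
      using assms(2-4) \<open>a \<in> X\<close> \<open>b \<in> Y\<close> \<open>c \<in> Z\<close> by (auto simp: dist_commute)
    then have "eps_congruent T \<epsilon> a b c"
      unfolding eps_congruent_def using assms(1) by blast
    ultimately show "triangle (a, b, c) \<subseteq> X \<union> Y \<union> Z \<and> card (triangle (a, b, c)) = 3 \<and>
        (\<exists>A' B' C'. triangle (a, b, c) = {A', B', C'} \<and> eps_congruent T \<epsilon> A' B' C')"
      using \<open>a \<in> X\<close> \<open>b \<in> Y\<close> \<open>c \<in> Z\<close> by (auto simp: triangle_def)
  qed
  have "card X * card Y * card Z = card (triangle ` (X \<times> Y \<times> Z))"
    using inj by (simp add: card_image card_cartesian_product)
  also have "\<dots> \<le> num_eps_congruent T \<epsilon> (X \<union> Y \<union> Z)"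
    unfolding num_eps_congruent_def
    by (rule card_mono[OF finite_subset[of _ "Pow (X \<union> Y \<union> Z)"] image]) (auto simp: assms(5-7))
  finally show ?thesis .
qed

lemma exists_set_tripartite_triangles_le_num_eps_congruent:
  assumes "s > 0" "\<epsilon> > 0"
  shows "\<exists>P. finite P \<and> card P = n \<and> tripartite_triangles n \<le> num_eps_congruent (s, s, s) \<epsilon> P"
proof -
  define r where "r = min \<epsilon> (1/3) * s"
  have r: "0 < r" "r \<le> \<epsilon> * min_side (s, s, s)" "r + r < s"
    using assms by (auto simp: r_def min_def)
  obtain A B C where ABC: "congruent_to A B C (s, s, s)"
    using exists_equilateral_triangle assms(1) by fastforce
  have "\<exists>X. X \<subseteq> cball x r \<and> finite X \<and> card X = m" for x :: "real^2" and m
    using infinite_arbitrarily_large[OF infinite_cball[OF \<open>r > 0\<close>]] by blast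
  then obtain X Y Z where
    X: "X \<subseteq> cball A r" "finite X" "card X = n div 3" and
    Y: "Y \<subseteq> cball B r" "finite Y" "card Y = (n + 1) div 3" and
    Z: "Z \<subseteq> cball C r" "finite Z" "card Z = (n + 2) div 3"
    by metis
  have "cball A r \<inter> cball B r = {}" "cball A r \<inter> cball C r = {}" "cball B r \<inter> cball C r = {}"
    using ABC r(3) by (auto intro!: disjoint_cballI simp: congruent_to_def dist_commute)
  then have disjoint: "X \<inter> Y = {}" "X \<inter> Z = {}" "Y \<inter> Z = {}" using X Y Z by blast+
  have "card (X \<union> Y \<union> Z) = n"
    using X Y Z disjoint div3_parts_sum[of n] by (simp add: card_Un_disjoint Int_Un_distrib2)
  moreover have "tripartite_triangles n \<le> num_eps_congruent (s, s, s) \<epsilon> (X \<union> Y \<union> Z)"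
    using card_product_le_num_eps_congruent[OF ABC _ _ _ X(2) Y(2) Z(2) disjoint]
      X Y Z subset_cball[OF r(2)] unfolding tripartite_triangles_def by fastforce
  ultimately show ?thesis using X Y Z by blast
qed

lemma num_eps_congruent_le_choose: "finite P \<Longrightarrow> num_eps_congruent T \<epsilon> P \<le> card P choose 3"
  unfolding num_eps_congruent_def
  by (rule order_trans[OF card_mono n_subsets[THEN eq_imp_le]]) (auto simp: finite_subset[of _ "Pow P"])

lemma num_eps_congruent_le_h_eps:
  assumes "finite P" "card P = n"
  shows "num_eps_congruent T \<epsilon> P \<le> h_eps n T \<epsilon>"
proof -
  have "finite {num_eps_congruent T \<epsilon> P | P. finite P \<and> card P = n}"
    by (rule finite_subset[of _ "{..n choose 3}"]) (auto dest: num_eps_congruent_le_choose)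
  then show ?thesis unfolding h_eps_def using assms by (auto intro: Max_ge)
qed

lemma h_eps_le:
  assumes "\<And>P. finite P \<Longrightarrow> card P = n \<Longrightarrow> num_eps_congruent T \<epsilon> P \<le> b"
  shows "h_eps n T \<epsilon> \<le> b"
proof -
  obtain P :: "(real^2) set" where "finite P" "card P = n"
    using infinite_arbitrarily_large[OF infinite_cball[of 1 0]] by auto
  then have "{num_eps_congruent T \<epsilon> P | P. finite P \<and> card P = n} \<noteq> {}" by blast
  moreover have "finite {num_eps_congruent T \<epsilon> P | P. finite P \<and> card P = n}"
    by (rule finite_subset[of _ "{..b}"]) (auto dest: assms)
  ultimately show ?thesis unfolding h_eps_def using assms by (auto simp: Max_le_iff)
qed

theorem theorem1p1:
  fixes s :: real and n :: nat
  assumes "s > 0" and "n \<ge> 1"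
  shows "h n (s, s, s) = (n div 3) * ((n + 1) div 3) * ((n + 2) div 3)"
proof -
  have lower: "tripartite_triangles n \<le> h_eps n (s, s, s) \<epsilon>" if "\<epsilon> > 0" for \<epsilon>
    using exists_set_tripartite_triangles_le_num_eps_congruent[OF \<open>s > 0\<close> that, of n]
      num_eps_congruent_le_h_eps order_trans by blast
  have upper: "h_eps n (s, s, s) (1/200) \<le> tripartite_triangles n"
    by (rule h_eps_le) (metis num_eps_congruent_equilateral_le)
  have "finite {h_eps n (s, s, s) \<epsilon> | \<epsilon>. \<epsilon> > 0}"
    by (rule finite_subset[of _ "{..n choose 3}"]) (auto intro: h_eps_le num_eps_congruent_le_choose)
  then have "h n (s, s, s) = tripartite_triangles n"
    unfolding h_def using lower upper
    by (intro Min_eqI) (auto intro!: exI[of _ "1/200"] intro: antisym)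
  then show ?thesis by (simp add: tripartite_triangles_def)
qed

end
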